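(* Suppose $s_0,s_1,s_2,s_3\in\sum\mathbb{R}(x,y)^2$ satisfy $s_0\,xy=s_1+s_2\,x+s_3\,y$. Then $s_0=s_1=s_2=s_3=0$.
   Context: $\mathbb{R}(x,y)$ is the field of rational functions in two real variables and $\sum\mathbb{R}(x,y)^2$ is the set of finite sums of squares of its elements. *)

theory Defs
  imports "HOL-Computational_Algebra.Polynomial" "HOL-Computational_Algebra.Fraction_Field"
begin

text \<open>The field R(x,y) of real rational functions in two variables, realised as
  the fraction field of R[x][y] (polynomials in y with coefficients in R[x]).\<close>
type_synonym rat_fun2 = "real poly poly fract"

definition varX :: rat_fun2 where
  "varX = Fract [:[:0, 1:]:] 1"

definition varY :: rat_fun2 where
  "varY = Fract [:0, 1:] 1"

definition sums_of_squares :: "'a::comm_ring_1 set" where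
  "sums_of_squares = {s. \<exists>xs. s = sum_list (map (\<lambda>a. a ^ 2) xs)}"

end

theory Submission
  imports Defs
begin

(* Call c "sos-free" if  a + c b = 0  with sums of squares a, b forces a = b = 0.
   Over an integral domain in which 1 is sos-free (e.g. R), a nonzero sum of squares
   of polynomials has even degree and a sum-of-squares leading coefficient; more
   generally the leading coefficient of A + c B (A, B such polynomials, c sos-free)
   cannot cancel.  This shows that constants c stay sos-free in the polynomial ring,
   and that x and -x are sos-free (otherwise a + x b would have odd degree).
   In R[x][y] put E = P1 + x P2 and F = P3 - x P0; the relation says E + y F = 0
   with E, F of even degree in y, so E = F = 0, and sos-freeness of x and -x gives
   P0 = ... = P3 = 0.  Finally the statement over the fraction field follows by
   clearing denominators with a common square. *)

lemma sos_zero: "0 \<in> sums_of_squares"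
  unfolding sums_of_squares_def by (rule CollectI, rule exI[of _ "[]"]) simp

lemma sos_square: "a ^ 2 \<in> sums_of_squares"
  unfolding sums_of_squares_def by (rule CollectI, rule exI[of _ "[a]"]) simp

lemma sos_add:
  assumes "a \<in> sums_of_squares" and "b \<in> sums_of_squares"
  shows "a + b \<in> sums_of_squares"
proof -
  obtain xs ys where "a = sum_list (map (\<lambda>a. a ^ 2) xs)" and "b = sum_list (map (\<lambda>a. a ^ 2) ys)"
    using assms unfolding sums_of_squares_def by auto
  then have "a + b = sum_list (map (\<lambda>a. a ^ 2) (xs @ ys))" by simp
  then show ?thesis unfolding sums_of_squares_def by blast
qed

lemma sos_mult_square:
  assumes "p \<in> sums_of_squares"
  shows "c ^ 2 * p \<in> sums_of_squares"
proof -
  obtain xs where "p = sum_list (map (\<lambda>a. a ^ 2) xs)"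
    using assms unfolding sums_of_squares_def by auto
  then have "c ^ 2 * p = sum_list (map (\<lambda>a. a ^ 2) (map ((*) c) xs))"
    by (induction xs arbitrary: p) (auto simp: algebra_simps power_mult_distrib)
  then show ?thesis unfolding sums_of_squares_def by blast
qed

text \<open>An element c is sos-free if no nontrivial relation a + c b = 0 between sums of
  squares exists.  sos_free 1 says that the sums of squares form a pointed cone.\<close>

definition sos_free :: "'a::comm_ring_1 \<Rightarrow> bool" where
  "sos_free c \<longleftrightarrow>
     (\<forall>a\<in>sums_of_squares. \<forall>b\<in>sums_of_squares. a + c * b = 0 \<longrightarrow> a = 0 \<and> b = 0)"

lemma sos_freeD:
  "sos_free c \<Longrightarrow> a \<in> sums_of_squares \<Longrightarrow> b \<in> sums_of_squares \<Longrightarrow> a + c * b = 0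
    \<Longrightarrow> a = 0 \<and> b = 0"
  unfolding sos_free_def by blast

lemma sos_free_real_one: "sos_free (1::real)"
proof -
  have "a \<ge> 0" if "a \<in> sums_of_squares" for a :: real
    using that unfolding sums_of_squares_def by (auto intro!: sum_list_nonneg)
  then show ?thesis unfolding sos_free_def by (metis add_nonneg_eq_0_iff mult_1)
qed

lemma coeff_sos_above_degree:
  assumes "lead_coeff p \<in> sums_of_squares" and "degree p \<le> n"
  shows "coeff p n \<in> sums_of_squares"
proof (cases "degree p = n")
  case True
  then show ?thesis using assms(1) by simp
next
  case False
  then have "coeff p n = 0" using assms(2) by (simp add: coeff_eq_0)
  then show ?thesis using sos_zero by simp
qed

text \<open>Key non-cancellation lemma: if A and B have even degree and sum-of-squares leading
  coefficients and c is sos-free, the top coefficients of A + c B do not cancel.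
  (The zero polynomial has degree 0 and leading coefficient 0, so it is allowed.)\<close>

lemma sos_leading_combination:
  fixes A B :: "'a::idom poly"
  assumes c: "sos_free c"
    and A: "even (degree A)" "lead_coeff A \<in> sums_of_squares"
    and B: "even (degree B)" "lead_coeff B \<in> sums_of_squares"
  shows "A + smult c B = 0 \<longleftrightarrow> A = 0 \<and> B = 0"
    and "even (degree (A + smult c B))"
    and "\<exists>a\<in>sums_of_squares. \<exists>b\<in>sums_of_squares. lead_coeff (A + smult c B) = a + c * b"
proof -
  define d where "d = max (degree A) (degree B)"
  define a b where "a = coeff A d" and "b = coeff B d"
  have a_sos: "a \<in> sums_of_squares"
    unfolding a_def by (rule coeff_sos_above_degree[OF A(2)]) (simp add: d_def)
  have b_sos: "b \<in> sums_of_squares"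
    unfolding b_def by (rule coeff_sos_above_degree[OF B(2)]) (simp add: d_def)
  have top: "coeff (A + smult c B) d = a + c * b" by (simp add: a_def b_def)
  have deg_le: "degree (A + smult c B) \<le> d"
    by (rule degree_add_le) (auto simp: d_def intro: order_trans[OF degree_smult_le])
  have even_d: "even d" using A(1) B(1) by (simp add: d_def max_def)
  have top_cases: "(A = 0 \<and> B = 0) \<or> (A + smult c B \<noteq> 0 \<and> degree (A + smult c B) = d
          \<and> lead_coeff (A + smult c B) = a + c * b)"
  proof (cases "a + c * b = 0")
    case True
    then have "a = 0" "b = 0" using sos_freeD[OF c a_sos b_sos] by auto
    moreover have "degree A = d \<or> degree B = d" by (simp add: d_def max_def)
    ultimately have "A = 0 \<or> B = 0" by (metis a_def b_def leading_coeff_0_iff)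
    then show ?thesis using \<open>a = 0\<close> \<open>b = 0\<close> by (auto simp: a_def b_def d_def)
  next
    case False
    then have "d \<le> degree (A + smult c B)" using top by (intro le_degree) simp
    moreover have "A + smult c B \<noteq> 0" using False top by (metis coeff_0)
    ultimately show ?thesis using deg_le top by simp
  qed
  then show "A + smult c B = 0 \<longleftrightarrow> A = 0 \<and> B = 0"
    and "even (degree (A + smult c B))"
    using even_d by auto
  from top_cases have "lead_coeff (A + smult c B) \<in> {a + c * b, 0 + c * 0}" by auto
  then show "\<exists>a\<in>sums_of_squares. \<exists>b\<in>sums_of_squares. lead_coeff (A + smult c B) = a + c * b"
    using a_sos b_sos sos_zero by blast
qed

lemma sos_poly_leading:
  fixes p :: "'a::idom poly"
  assumes one: "sos_free (1::'a)" and p: "p \<in> sums_of_squares"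
  shows "even (degree p) \<and> lead_coeff p \<in> sums_of_squares"
proof -
  obtain xs where "p = sum_list (map (\<lambda>a. a ^ 2) xs)"
    using p unfolding sums_of_squares_def by auto
  then show ?thesis
  proof (induction xs arbitrary: p)
    case Nil
    then show ?case using sos_zero by simp
  next
    case (Cons q xs)
    define r where "r = sum_list (map (\<lambda>a. a ^ 2) xs)"
    have r: "even (degree r)" "lead_coeff r \<in> sums_of_squares" using Cons.IH r_def by auto
    have q: "even (degree (q ^ 2))" "lead_coeff (q ^ 2) \<in> sums_of_squares"
      using degree_power_eq[of q 2] by (cases "q = 0") (auto simp: lead_coeff_power sos_square)
    obtain a b where "a \<in> sums_of_squares" "b \<in> sums_of_squares" "lead_coeff (q ^ 2 + r) = a + b"
      using sos_leading_combination(3)[OF one q r] by auto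
    then show ?case
      using sos_leading_combination(2)[OF one q r] sos_add Cons.prems r_def by auto
  qed
qed

lemma sos_free_const_poly:
  fixes c :: "'a::idom"
  assumes one: "sos_free (1::'a)" and c: "sos_free c"
  shows "sos_free [:c:]"
proof -
  have "a = 0 \<and> b = 0"
    if "a \<in> sums_of_squares" "b \<in> sums_of_squares" "a + [:c:] * b = 0" for a b :: "'a poly"
    using sos_leading_combination(1)[OF c] sos_poly_leading[OF one that(1)]
      sos_poly_leading[OF one that(2)] that(3) by simp
  then show ?thesis unfolding sos_free_def by blast
qed

lemma sos_free_poly_one: "sos_free (1::'a::idom) \<Longrightarrow> sos_free (1::'a poly)"
  using sos_free_const_poly[of 1] by (simp add: pCons_one)

text \<open>A polynomial of even degree plus x times another one of even degree vanishes
  only trivially, since x F has odd degree when F is nonzero.\<close>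

lemma even_degree_plus_var_times:
  fixes E F :: "'a::idom poly"
  assumes rel: "E + [:0, 1:] * F = 0" and "even (degree E)" and "even (degree F)"
  shows "E = 0 \<and> F = 0"
proof (cases "F = 0")
  case True
  then show ?thesis using rel by simp
next
  case False
  have "E = pCons 0 (- F)" using rel by (simp add: add_eq_0_iff2)
  then have "degree E = Suc (degree F)" using False by (simp add: degree_pCons_eq)
  then show ?thesis using assms(2,3) by simp
qed

lemma sos_free_var:
  assumes one: "sos_free (1::'a::idom)"
  shows "sos_free [:0, 1::'a:]" and "sos_free [:0, -1::'a:]"
proof -
  have even: "even (degree p)" if "p \<in> sums_of_squares" for p :: "'a poly"
    using sos_poly_leading[OF one that] by simp
  show "sos_free [:0, 1::'a:]"
    unfolding sos_free_def using even even_degree_plus_var_times by blast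
  have "a + [:0, -1:] * b = a + [:0, 1:] * (- b)" for a b :: "'a poly" by simp
  then show "sos_free [:0, -1::'a:]"
    unfolding sos_free_def using even even_degree_plus_var_times
    by (metis degree_minus neg_equal_0_iff_equal)
qed

text \<open>Polynomial version of the theorem, in A[x][y] for any domain A with pointed sums
  of squares; here x is the constant polynomial [:[:0,1:]:] and y is [:0,1:].\<close>

lemma sos_relation_poly2:
  fixes P0 P1 P2 P3 :: "'a::idom poly poly"
  assumes one: "sos_free (1::'a)"
    and sos: "P0 \<in> sums_of_squares" "P1 \<in> sums_of_squares"
             "P2 \<in> sums_of_squares" "P3 \<in> sums_of_squares"
    and rel: "P0 * [:[:0, 1:]:] * [:0, 1:] = P1 + P2 * [:[:0, 1:]:] + P3 * [:0, 1:]"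
  shows "P0 = 0 \<and> P1 = 0 \<and> P2 = 0 \<and> P3 = 0"
proof -
  define x :: "'a poly" where "x = [:0, 1:]"
  have one': "sos_free (1::'a poly)" using sos_free_poly_one[OF one] .
  have free_x: "sos_free x" and free_neg_x: "sos_free (- x)"
    using sos_free_var[OF one] by (simp_all add: x_def)
  have lead: "even (degree P) \<and> lead_coeff P \<in> sums_of_squares"
    if "P \<in> sums_of_squares" for P :: "'a poly poly"
    using sos_poly_leading[OF one' that] .
  define E where "E = P1 + smult x P2"
  define F where "F = P3 + smult (- x) P0"
  have E: "E = 0 \<longleftrightarrow> P1 = 0 \<and> P2 = 0" "even (degree E)"
    unfolding E_def using lead[OF sos(2)] lead[OF sos(3)]
      sos_leading_combination(1,2)[OF free_x, of P1 P2] by auto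
  have F: "F = 0 \<longleftrightarrow> P3 = 0 \<and> P0 = 0" "even (degree F)"
    unfolding F_def using lead[OF sos(4)] lead[OF sos(1)]
      sos_leading_combination(1,2)[OF free_neg_x, of P3 P0] by auto
  have "E + [:0, 1:] * F = 0"
  proof -
    have "pCons 0 (smult x P0) = P1 + smult x P2 + pCons 0 P3"
      using rel by (simp add: x_def algebra_simps)
    moreover have "pCons 0 (P3 - smult x P0) = pCons 0 P3 - pCons 0 (smult x P0)" by simp
    ultimately show ?thesis by (simp add: E_def F_def algebra_simps)
  qed
  then have "E = 0" "F = 0" using even_degree_plus_var_times E(2) F(2) by blast+
  then show ?thesis using E(1) F(1) by blast
qed

definition sos_cleared_by :: "'a::idom \<Rightarrow> 'a fract \<Rightarrow> bool" where
  "sos_cleared_by d s \<longleftrightarrow> (\<exists>P\<in>sums_of_squares. Fract (d ^ 2) 1 * s = Fract P 1)"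

lemma sos_cleared_by_mult:
  assumes "sos_cleared_by d s"
  shows "sos_cleared_by (e * d) s"
proof -
  obtain P where P: "P \<in> sums_of_squares" "Fract (d ^ 2) 1 * s = Fract P 1"
    using assms unfolding sos_cleared_by_def by blast
  have "Fract ((e * d) ^ 2) 1 * s = Fract (e ^ 2) 1 * (Fract (d ^ 2) 1 * s)"
    by (simp add: power_mult_distrib)
  also have "\<dots> = Fract (e ^ 2 * P) 1" using P(2) by simp
  finally show ?thesis using sos_mult_square[OF P(1)] unfolding sos_cleared_by_def by blast
qed

lemma Fract_1_eq_0_iff: "Fract (a::'a::idom) 1 = 0 \<longleftrightarrow> a = 0"
  by (simp add: Zero_fract_def eq_fract)

lemma sos_fract_cleared:
  assumes "(s :: 'a::idom fract) \<in> sums_of_squares"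
  shows "\<exists>d. d \<noteq> 0 \<and> sos_cleared_by d s"
proof -
  obtain xs where "s = sum_list (map (\<lambda>a. a ^ 2) xs)"
    using assms unfolding sums_of_squares_def by auto
  then show ?thesis
  proof (induction xs arbitrary: s)
    case Nil
    then show ?case using sos_zero unfolding sos_cleared_by_def
      by (intro exI[of _ 1]) (auto simp: Fract_1_eq_0_iff)
  next
    case (Cons f xs)
    define r where "r = sum_list (map (\<lambda>a. a ^ 2) xs)"
    obtain d P where d: "d \<noteq> 0" and P: "P \<in> sums_of_squares"
      and dr: "Fract (d ^ 2) 1 * r = Fract P 1"
      using Cons.IH r_def unfolding sos_cleared_by_def by blast
    obtain a b where f: "f = Fract a b" and b: "b \<noteq> 0" by (cases f)
    have "Fract ((b * d) ^ 2) 1 * s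
        = Fract ((b * d) ^ 2) 1 * f ^ 2 + Fract (b ^ 2) 1 * (Fract (d ^ 2) 1 * r)"
      using Cons.prems by (simp add: r_def algebra_simps)
    also have "Fract ((b * d) ^ 2) 1 * f ^ 2 = Fract ((d * a) ^ 2) 1"
      unfolding f using b by (simp add: power2_eq_square eq_fract algebra_simps)
    also have "Fract (b ^ 2) 1 * (Fract (d ^ 2) 1 * r) = Fract (b ^ 2 * P) 1"
      using dr by simp
    finally have "Fract ((b * d) ^ 2) 1 * s = Fract ((d * a) ^ 2 + b ^ 2 * P) 1" by simp
    moreover have "(d * a) ^ 2 + b ^ 2 * P \<in> sums_of_squares"
      using sos_add[OF sos_square sos_mult_square[OF P]] .
    ultimately show ?case using b d unfolding sos_cleared_by_def by (intro exI[of _ "b * d"]) auto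
  qed
qed

lemma sos_relation_fract:
  fixes u v w :: "'a::idom"
  assumes poly_rel: "\<And>P0 P1 P2 P3. P0 \<in> sums_of_squares \<Longrightarrow> P1 \<in> sums_of_squares \<Longrightarrow>
      P2 \<in> sums_of_squares \<Longrightarrow> P3 \<in> sums_of_squares \<Longrightarrow> P0 * u = P1 + P2 * v + P3 * w \<Longrightarrow>
      P0 = 0 \<and> P1 = 0 \<and> P2 = 0 \<and> P3 = 0"
    and sos: "s0 \<in> sums_of_squares" "s1 \<in> sums_of_squares"
             "s2 \<in> sums_of_squares" "s3 \<in> sums_of_squares"
    and rel: "s0 * Fract u 1 = s1 + s2 * Fract v 1 + s3 * Fract w 1"
  shows "s0 = 0 \<and> s1 = 0 \<and> s2 = 0 \<and> s3 = 0"
proof -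
  obtain d0 d1 d2 d3 where d: "d0 \<noteq> 0" "d1 \<noteq> 0" "d2 \<noteq> 0" "d3 \<noteq> 0"
    and cl: "sos_cleared_by d0 s0" "sos_cleared_by d1 s1"
            "sos_cleared_by d2 s2" "sos_cleared_by d3 s3"
    using sos_fract_cleared sos by meson
  define D where "D = d0 * d1 * d2 * d3"
  have "sos_cleared_by D s0" "sos_cleared_by D s1" "sos_cleared_by D s2" "sos_cleared_by D s3"
    using sos_cleared_by_mult[OF cl(1), of "d1 * d2 * d3"] sos_cleared_by_mult[OF cl(2), of "d0 * d2 * d3"]
      sos_cleared_by_mult[OF cl(3), of "d0 * d1 * d3"] sos_cleared_by_mult[OF cl(4), of "d0 * d1 * d2"]
    by (simp_all add: D_def ac_simps)
  then obtain Q0 Q1 Q2 Q3 where Q: "Q0 \<in> sums_of_squares" "Q1 \<in> sums_of_squares"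
      "Q2 \<in> sums_of_squares" "Q3 \<in> sums_of_squares"
    and K: "Fract (D ^ 2) 1 * s0 = Fract Q0 1" "Fract (D ^ 2) 1 * s1 = Fract Q1 1"
      "Fract (D ^ 2) 1 * s2 = Fract Q2 1" "Fract (D ^ 2) 1 * s3 = Fract Q3 1"
    unfolding sos_cleared_by_def by metis
  have K_nz: "Fract (D ^ 2) 1 \<noteq> 0" using d by (simp add: D_def Fract_1_eq_0_iff)
  have "Fract (Q0 * u) 1 = (Fract (D ^ 2) 1 * s0) * Fract u 1" using K(1) by simp
  also have "\<dots> = Fract (D ^ 2) 1 * (s1 + s2 * Fract v 1 + s3 * Fract w 1)"
    by (simp only: mult.assoc rel)
  also have "\<dots> = Fract (D ^ 2) 1 * s1 + (Fract (D ^ 2) 1 * s2) * Fract v 1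
      + (Fract (D ^ 2) 1 * s3) * Fract w 1"
    by (simp only: distrib_left mult.assoc)
  also have "\<dots> = Fract (Q1 + Q2 * v + Q3 * w) 1" by (simp only: K mult_fract add_fract) simp
  finally have "Q0 = 0 \<and> Q1 = 0 \<and> Q2 = 0 \<and> Q3 = 0"
    using poly_rel[OF Q] by (simp add: eq_fract)
  then show ?thesis using K K_nz by (metis Fract_1_eq_0_iff mult_eq_0_iff)
qed

theorem mainTheorem5:
  fixes s0 s1 s2 s3 :: rat_fun2
  assumes "s0 \<in> sums_of_squares" and "s1 \<in> sums_of_squares"
    and "s2 \<in> sums_of_squares" and "s3 \<in> sums_of_squares"
    and "s0 * varX * varY = s1 + s2 * varX + s3 * varY"
  shows "s0 = 0 \<and> s1 = 0 \<and> s2 = 0 \<and> s3 = 0"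
proof -
  define x y :: "real poly poly" where "x = [:[:0, 1:]:]" and "y = [:0, 1:]"
  have poly_rel: "P0 = 0 \<and> P1 = 0 \<and> P2 = 0 \<and> P3 = 0"
    if "P0 \<in> sums_of_squares" "P1 \<in> sums_of_squares" "P2 \<in> sums_of_squares"
      "P3 \<in> sums_of_squares" "P0 * (x * y) = P1 + P2 * x + P3 * y" for P0 P1 P2 P3
    using sos_relation_poly2[OF sos_free_real_one that(1-4)] that(5)
    unfolding x_def y_def mult.assoc by blast
  have "s0 * Fract (x * y) 1 = s1 + s2 * Fract x 1 + s3 * Fract y 1"
    using assms(5) unfolding varX_def varY_def x_def y_def
    by (simp only: mult.assoc mult_fract mult_1)
  then show ?thesis using sos_relation_fract[OF poly_rel assms(1-4)] by blast
qed

end
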